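(* Let $p$ and $q$ be (not necessarily distinct) primes, let $k=\mathbb{Z}[\zeta_p,\zeta_q]\subseteq\mathbb{C}$ with $\zeta_p,\zeta_q$ primitive $p$-th and $q$-th roots of unity, let $M$ be a $k$-module, $E=\mathrm{End}_{k}(M)$, $\pi=1-\zeta_p$, $\tau=1-\zeta_q$, and let $A\subseteq E$ be a $k$-subalgebra that is both $p$-good and $q$-good. (1) If $s\in A$ is such that $1+\pi\tau s$ is a unit of $A$ generating a subgroup of $A^*$ in which every element has finite order, then $s=0$. (2) If $s,r\in A$ are such that $1+\pi s$ and $1+\tau r$ are units of $A$ and the subgroup of $A^*$ they generate is torsion (every element has finite order), then $1+\pi s$ and $1+\tau r$ commute.
   Context: For a commutative ring $k$, an element $p\in k$ and a $k$-module $M$, a $k$-subalgebra $A\subseteq\mathrm{End}_k(M)$ is called $p$-good if the endomorphism $p(1-ps)$ of $M$ is injective for every $s\in A$. *)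

theory Defs
  imports "HOL-Computational_Algebra.Primes" "HOL-Algebra.Generated_Groups" Complex_Main
begin

definition prim_root :: "nat \<Rightarrow> complex \<Rightarrow> bool" where
  "prim_root n z \<longleftrightarrow> z ^ n = 1 \<and> (\<forall>j. 0 < j \<and> j < n \<longrightarrow> z ^ j \<noteq> 1)"

inductive_set zring2 :: "complex \<Rightarrow> complex \<Rightarrow> complex set" for a b where
  one: "1 \<in> zring2 a b"
| gen1: "a \<in> zring2 a b"
| gen2: "b \<in> zring2 a b"
| neg: "x \<in> zring2 a b \<Longrightarrow> - x \<in> zring2 a b"
| add: "x \<in> zring2 a b \<Longrightarrow> y \<in> zring2 a b \<Longrightarrow> x + y \<in> zring2 a b"
| mul: "x \<in> zring2 a b \<Longrightarrow> y \<in> zring2 a b \<Longrightarrow> x * y \<in> zring2 a b"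

definition is_module :: "complex set \<Rightarrow> (complex \<Rightarrow> 'm::ab_group_add \<Rightarrow> 'm) \<Rightarrow> bool" where
  "is_module k sm \<longleftrightarrow>
     (\<forall>a\<in>k. \<forall>x y. sm a (x + y) = sm a x + sm a y) \<and>
     (\<forall>a\<in>k. \<forall>b\<in>k. \<forall>x. sm (a + b) x = sm a x + sm b x) \<and>
     (\<forall>a\<in>k. \<forall>b\<in>k. \<forall>x. sm (a * b) x = sm a (sm b x)) \<and>
     (\<forall>x. sm 1 x = x)"

definition endos :: "complex set \<Rightarrow> (complex \<Rightarrow> 'm::ab_group_add \<Rightarrow> 'm) \<Rightarrow> ('m \<Rightarrow> 'm) set" where
  "endos k sm = {f. (\<forall>x y. f (x + y) = f x + f y) \<and> (\<forall>a\<in>k. \<forall>x. f (sm a x) = sm a (f x))}"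

definition is_subalgebra :: "complex set \<Rightarrow> (complex \<Rightarrow> 'm::ab_group_add \<Rightarrow> 'm) \<Rightarrow> ('m \<Rightarrow> 'm) set \<Rightarrow> bool" where
  "is_subalgebra k sm A \<longleftrightarrow>
     A \<subseteq> endos k sm \<and> id \<in> A \<and>
     (\<forall>f\<in>A. \<forall>g\<in>A. (\<lambda>x. f x + g x) \<in> A) \<and>
     (\<forall>f\<in>A. \<forall>g\<in>A. f \<circ> g \<in> A) \<and>
     (\<forall>a\<in>k. \<forall>f\<in>A. (\<lambda>x. sm a (f x)) \<in> A)"

definition good :: "(complex \<Rightarrow> 'm::ab_group_add \<Rightarrow> 'm) \<Rightarrow> complex \<Rightarrow> ('m \<Rightarrow> 'm) set \<Rightarrow> bool" where
  "good sm c A \<longleftrightarrow> (\<forall>s\<in>A. inj (\<lambda>x. sm c (x - sm c (s x))))"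

definition alg_monoid :: "('m \<Rightarrow> 'm) set \<Rightarrow> ('m \<Rightarrow> 'm) monoid" where
  "alg_monoid A = \<lparr>carrier = A, mult = (\<circ>), one = id\<rparr>"

definition torsion_group :: "('a, 'b) monoid_scheme \<Rightarrow> bool" where
  "torsion_group G \<longleftrightarrow> (\<forall>g\<in>carrier G. \<exists>n::nat. n > 0 \<and> g [^]\<^bsub>G\<^esub> n = \<one>\<^bsub>G\<^esub>)"

definition subgroup_gen :: "('a, 'b) monoid_scheme \<Rightarrow> 'a set \<Rightarrow> 'a monoid" where
  "subgroup_gen G S = \<lparr>carrier = generate G S, mult = mult G, one = one G\<rparr>"

end

theory Submission
  imports Defs "HOL-Computational_Algebra.Polynomial"
begin

text \<open>
  Write c = \<pi>\<tau>. If u = 1 + c t has finite order, replacing u by a suitable power (again of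
  the form 1 + c t') reduces to the case that u has prime order l. Then 0 = u^l - 1 = c t N(t)
  with N = l (1 + c X S) + (c X)^(l-1), so it suffices that N(t) is injective. Goodness makes
  1 - \<pi> f injective for every f in A, because \<pi>^p lies in p k. If l \<noteq> p, a Bezout relation
  a l + b p = 1 together with p \<in> \<pi> k turns a N into 1 - \<pi> Q; symmetrically if l \<noteq> q; and
  if l = p = q then c^(p-1) lies in p \<pi> k, so N = p (1 - \<pi> Q). For part (2), the commutator of
  1 + \<pi> s and 1 + \<tau> r is 1 + \<pi>\<tau> t with t essentially s r - r s, so part (1) applies to it.
\<close>

lemma binomial_prime_expansion:
  fixes y :: "'a::comm_ring_1"
  assumes "prime p"
  shows "(1 + y) ^ p = 1 + y ^ p + of_nat p * y * (\<Sum>i<p - 1. of_nat ((p choose Suc i) div p) * y ^ i)"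
proof -
  obtain m where p: "p = Suc m" using prime_gt_0_nat[OF assms] not0_implies_Suc by blast
  have "(1 + y) ^ p = (\<Sum>j\<le>p. of_nat (p choose j) * y ^ j)"
    using binomial_ring[of y 1 p] by (simp add: add.commute)
  also have "\<dots> = 1 + (\<Sum>i<p - 1. of_nat (p choose Suc i) * y ^ Suc i) + y ^ p"
    unfolding p sum.atMost_Suc_shift
    unfolding lessThan_Suc_atMost[symmetric] sum.lessThan_Suc by (simp del: binomial_Suc_Suc)
  also have "(\<Sum>i<p - 1. of_nat (p choose Suc i) * y ^ Suc i)
           = of_nat p * y * (\<Sum>i<p - 1. of_nat ((p choose Suc i) div p) * y ^ i)"
    unfolding sum_distrib_left
  proof (rule sum.cong)
    fix i assume "i \<in> {..<p - 1}"
    hence "p dvd (p choose Suc i)" using assms by (intro dvd_choose_prime) auto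
    hence "(of_nat (p choose Suc i) :: 'a) = of_nat p * of_nat ((p choose Suc i) div p)"
      by (metis dvd_mult_div_cancel of_nat_mult)
    thus "of_nat (p choose Suc i) * y ^ Suc i = of_nat p * y * (of_nat ((p choose Suc i) div p) * y ^ i)"
      by (simp add: algebra_simps)
  qed simp
  finally show ?thesis by (simp add: algebra_simps)
qed

lemma one_minus_mult_nested_sum:
  fixes z :: "'a::comm_ring_1"
  shows "(1 - z) * (\<Sum>i<n. \<Sum>j<i. z ^ j) = of_nat n - (\<Sum>i<n. z ^ i)"
proof -
  have "(1 - z) * (\<Sum>i<n. \<Sum>j<i. z ^ j) = (\<Sum>i<n. (1 - z) * (\<Sum>j<i. z ^ j))"
    by (rule sum_distrib_left)
  also have "\<dots> = (\<Sum>i<n. 1 - z ^ i)" by (simp only: one_diff_power_eq)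
  finally show ?thesis by (simp add: sum_subtractf)
qed

lemma prim_root_sum_powers:
  assumes "1 < n" "prim_root n z"
  shows "(\<Sum>i<n. z ^ i) = 0"
proof -
  have "z \<noteq> 1"
    using assms unfolding prim_root_def by (metis power_one_right zero_less_one)
  thus ?thesis using geometric_sum[of z n] assms(2) by (simp add: prim_root_def)
qed

lemma prim_root_powers_exhaust:
  assumes "0 < n" "prim_root n z" "w ^ n = 1"
  shows "\<exists>j. w = z ^ j"
proof -
  have "z \<noteq> 0" using assms(1,2) by (auto simp: prim_root_def power_0_left)
  have "z ^ i \<noteq> z ^ j" if "i < j" "j < n" for i j
  proof
    assume "z ^ i = z ^ j"
    moreover have "z ^ i * z ^ (j - i) = z ^ j" using that(1) by (simp flip: power_add)
    ultimately have "z ^ i * z ^ (j - i) = z ^ i * 1" by simp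
    hence "z ^ (j - i) = 1" using \<open>z \<noteq> 0\<close> by simp
    thus False using assms(2) that by (simp add: prim_root_def)
  qed
  hence "inj_on (\<lambda>j. z ^ j) {..<n}" unfolding inj_on_def by (metis lessThan_iff linorder_neqE_nat)
  hence "card ((\<lambda>j. z ^ j) ` {..<n}) = card {x::complex. x ^ n = 1}"
    using card_image[of "\<lambda>j. z ^ j" "{..<n}"] card_roots_unity_eq[OF assms(1)] by simp
  moreover have "(\<lambda>j. z ^ j) ` {..<n} \<subseteq> {x. x ^ n = 1}"
    using assms(2) by (auto simp: prim_root_def simp flip: power_mult) (metis mult.commute power_mult power_one)
  ultimately have "(\<lambda>j. z ^ j) ` {..<n} = {x. x ^ n = 1}"
    using card_subset_eq[OF finite_roots_unity] assms(1) by (metis Suc_leI One_nat_def)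
  thus ?thesis using assms(3) by auto
qed

lemma pow_eq_funpow:
  assumes "mult H = (\<circ>)" "one H = id"
  shows "x [^]\<^bsub>H\<^esub> (n::nat) = x ^^ n"
  by (induction n) (simp_all add: assms funpow_Suc_right del: funpow.simps(2))

lemma torsion_subgroup_gen_funpow:
  assumes "torsion_group (subgroup_gen (units_of (alg_monoid A)) X)"
    and "w \<in> generate (units_of (alg_monoid A)) X"
  obtains n where "n > 0" "w ^^ n = id"
proof -
  let ?H = "subgroup_gen (units_of (alg_monoid A)) X"
  have H: "mult ?H = (\<circ>)" "one ?H = id"
    by (simp_all add: subgroup_gen_def units_of_mult units_of_one alg_monoid_def)
  have "w \<in> carrier ?H" using assms(2) by (simp add: subgroup_gen_def)
  then obtain n :: nat where "n > 0" "w [^]\<^bsub>?H\<^esub> n = \<one>\<^bsub>?H\<^esub>"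
    using assms(1) unfolding torsion_group_def by blast
  thus thesis using that by (simp only: pow_eq_funpow[OF H] H(2))
qed

locale endo_algebra =
  fixes k :: "complex set" and sm :: "complex \<Rightarrow> 'm::ab_group_add \<Rightarrow> 'm"
    and A :: "('m \<Rightarrow> 'm) set"
  assumes k_one: "1 \<in> k" and k_uminus: "a \<in> k \<Longrightarrow> - a \<in> k"
    and k_add: "a \<in> k \<Longrightarrow> b \<in> k \<Longrightarrow> a + b \<in> k"
    and k_mult: "a \<in> k \<Longrightarrow> b \<in> k \<Longrightarrow> a * b \<in> k"
    and module: "is_module k sm" and subalgebra: "is_subalgebra k sm A"
begin

lemma k_zero: "0 \<in> k"
  using k_add[OF k_one k_uminus[OF k_one]] by simp

lemma k_diff: "a \<in> k \<Longrightarrow> b \<in> k \<Longrightarrow> a - b \<in> k"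
  using k_add k_uminus by fastforce

lemma k_of_nat: "of_nat n \<in> k"
  by (induction n) (auto intro: k_add k_one k_zero)

lemma k_of_int: "of_int n \<in> k"
  by (cases n) (auto intro: k_of_nat k_uminus simp del: of_nat_Suc)

lemma k_power: "a \<in> k \<Longrightarrow> a ^ n \<in> k"
  by (induction n) (auto intro: k_mult k_one)

lemma k_sum: "(\<And>i. i \<in> I \<Longrightarrow> f i \<in> k) \<Longrightarrow> sum f I \<in> k"
  by (induction I rule: infinite_finite_induct) (auto intro: k_add k_zero)

lemma sm_add_right: "a \<in> k \<Longrightarrow> sm a (x + y) = sm a x + sm a y"
  using module by (simp add: is_module_def)

lemma sm_add_left: "a \<in> k \<Longrightarrow> b \<in> k \<Longrightarrow> sm (a + b) x = sm a x + sm b x"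
  using module by (simp add: is_module_def)

lemma sm_mult: "a \<in> k \<Longrightarrow> b \<in> k \<Longrightarrow> sm (a * b) x = sm a (sm b x)"
  using module by (simp add: is_module_def)

lemma sm_one [simp]: "sm 1 x = x"
  using module by (simp add: is_module_def)

lemma sm_zero_right: "a \<in> k \<Longrightarrow> sm a 0 = 0"
  using sm_add_right[of a 0 0] by simp

lemma sm_zero_left [simp]: "sm 0 x = 0"
  using sm_add_left[OF k_zero k_zero, of x] by simp

lemma sm_diff_right: "a \<in> k \<Longrightarrow> sm a (x - y) = sm a x - sm a y"
  by (metis add_diff_cancel diff_add_cancel sm_add_right)

lemma sm_minus_left: "a \<in> k \<Longrightarrow> sm (- a) x = - sm a x"
  by (metis add.right_inverse k_uminus minus_unique sm_add_left sm_zero_left)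

lemma A_endos: "f \<in> A \<Longrightarrow> f \<in> endos k sm"
  using subalgebra by (auto simp: is_subalgebra_def)

lemma A_add_hom: "f \<in> A \<Longrightarrow> f (x + y) = f x + f y"
  using A_endos by (simp add: endos_def)

lemma A_sm_hom: "f \<in> A \<Longrightarrow> a \<in> k \<Longrightarrow> f (sm a x) = sm a (f x)"
  using A_endos by (simp add: endos_def)

lemma A_zero_hom: "f \<in> A \<Longrightarrow> f 0 = 0"
  using A_add_hom[of f 0 0] by simp

lemma A_id: "(\<lambda>x. x) \<in> A"
  using subalgebra by (simp add: is_subalgebra_def id_def)

lemma A_add: "f \<in> A \<Longrightarrow> g \<in> A \<Longrightarrow> (\<lambda>x. f x + g x) \<in> A"
  using subalgebra by (simp add: is_subalgebra_def)

lemma A_comp: "f \<in> A \<Longrightarrow> g \<in> A \<Longrightarrow> (\<lambda>x. f (g x)) \<in> A"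
  using subalgebra by (simp add: is_subalgebra_def comp_def)

lemma A_sm: "a \<in> k \<Longrightarrow> f \<in> A \<Longrightarrow> (\<lambda>x. sm a (f x)) \<in> A"
  using subalgebra by (simp add: is_subalgebra_def)

lemma A_zero: "(\<lambda>x. 0) \<in> A"
  using A_sm[OF k_zero A_id] by simp

lemma A_diff: "f \<in> A \<Longrightarrow> g \<in> A \<Longrightarrow> (\<lambda>x. f x - g x) \<in> A"
  using A_add[OF _ A_sm[OF k_uminus[OF k_one]], of f g] by (simp add: sm_minus_left[OF k_one])

lemma A_funpow: "f \<in> A \<Longrightarrow> f ^^ n \<in> A"
  by (induction n) (auto simp: A_id[folded id_def] A_comp[unfolded comp_def[symmetric]])

lemma monoid_alg_monoid: "monoid (alg_monoid A)"
  by (rule monoidI) (auto simp: alg_monoid_def A_comp[unfolded comp_def[symmetric]] A_id[folded id_def])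

subsection \<open>Polynomials in an endomorphism\<close>

definition kpoly :: "complex poly \<Rightarrow> bool" where
  "kpoly P \<longleftrightarrow> (\<forall>i. coeff P i \<in> k)"

lemma kpoly_pCons_iff: "kpoly (pCons a P) \<longleftrightarrow> a \<in> k \<and> kpoly P"
  unfolding kpoly_def by (metis coeff_pCons_0 coeff_pCons_Suc not0_implies_Suc)

lemma kpoly_0 [simp]: "kpoly 0"
  by (simp add: kpoly_def k_zero)

lemma kpoly_const: "a \<in> k \<Longrightarrow> kpoly [:a:]"
  by (simp add: kpoly_pCons_iff)

lemma kpoly_1: "kpoly 1"
  by (simp add: one_pCons kpoly_const k_one)

lemma kpoly_linear: "a \<in> k \<Longrightarrow> b \<in> k \<Longrightarrow> kpoly [:a, b:]"
  by (simp add: kpoly_pCons_iff)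

lemma kpoly_add: "kpoly P \<Longrightarrow> kpoly Q \<Longrightarrow> kpoly (P + Q)"
  by (simp add: kpoly_def k_add)

lemma kpoly_uminus: "kpoly P \<Longrightarrow> kpoly (- P)"
  by (simp add: kpoly_def k_uminus)

lemma kpoly_diff: "kpoly P \<Longrightarrow> kpoly Q \<Longrightarrow> kpoly (P - Q)"
  by (simp add: kpoly_def k_diff)

lemma kpoly_smult: "a \<in> k \<Longrightarrow> kpoly P \<Longrightarrow> kpoly (smult a P)"
  by (simp add: kpoly_def k_mult)

lemma kpoly_mult: "kpoly P \<Longrightarrow> kpoly Q \<Longrightarrow> kpoly (P * Q)"
  by (auto simp: kpoly_def coeff_mult intro!: k_sum k_mult)

lemma kpoly_power: "kpoly P \<Longrightarrow> kpoly (P ^ n)"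
  by (induction n) (auto simp: kpoly_1 kpoly_mult)

lemma kpoly_of_nat: "kpoly (of_nat n)"
  by (simp add: of_nat_poly kpoly_const k_of_nat)

lemma kpoly_sum: "(\<And>i. i \<in> I \<Longrightarrow> kpoly (f i)) \<Longrightarrow> kpoly (sum f I)"
  by (induction I rule: infinite_finite_induct) (auto intro: kpoly_add)

definition poly_op :: "('m \<Rightarrow> 'm) \<Rightarrow> complex poly \<Rightarrow> 'm \<Rightarrow> 'm" where
  "poly_op t P = fold_coeffs (\<lambda>a f x. sm a x + t (f x)) P (\<lambda>x. 0)"

lemma poly_op_0 [simp]: "poly_op t 0 = (\<lambda>x. 0)"
  by (simp add: poly_op_def)

lemma poly_op_pCons: "t \<in> A \<Longrightarrow> poly_op t (pCons a P) x = sm a x + t (poly_op t P x)"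
  by (cases "a = 0 \<and> P = 0") (auto simp: poly_op_def A_zero_hom)

lemma poly_op_const: "t \<in> A \<Longrightarrow> poly_op t [:a:] x = sm a x"
  by (simp add: poly_op_pCons A_zero_hom)

lemma poly_op_1: "t \<in> A \<Longrightarrow> poly_op t 1 x = x"
  by (simp add: one_pCons poly_op_const)

lemma poly_op_linear: "t \<in> A \<Longrightarrow> b \<in> k \<Longrightarrow> poly_op t [:a, b:] x = sm a x + sm b (t x)"
  by (simp add: poly_op_pCons poly_op_const A_sm_hom A_zero_hom)

lemma poly_op_in_A: "t \<in> A \<Longrightarrow> kpoly P \<Longrightarrow> poly_op t P \<in> A"
proof (induction P)
  case 0
  show ?case using A_zero by simp
next
  case (pCons a P)
  have "(\<lambda>x. sm a x + t (poly_op t P x)) \<in> A"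
    using pCons by (auto simp: kpoly_pCons_iff intro!: A_add A_comp[of t] A_sm[of a "\<lambda>x. x", OF _ A_id])
  moreover have "poly_op t (pCons a P) = (\<lambda>x. sm a x + t (poly_op t P x))"
    using poly_op_pCons[OF pCons.prems(1)] by auto
  ultimately show ?case by simp
qed

lemma poly_op_add:
  "t \<in> A \<Longrightarrow> kpoly P \<Longrightarrow> kpoly Q \<Longrightarrow> poly_op t (P + Q) x = poly_op t P x + poly_op t Q x"
proof (induction P Q arbitrary: x rule: poly_induct2)
  case (pCons a P b Q)
  thus ?case
    by (simp add: poly_op_pCons kpoly_pCons_iff sm_add_left A_add_hom algebra_simps)
qed simp

lemma poly_op_smult:
  "t \<in> A \<Longrightarrow> a \<in> k \<Longrightarrow> kpoly Q \<Longrightarrow> poly_op t (smult a Q) x = sm a (poly_op t Q x)"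
  by (induction Q arbitrary: x)
    (simp_all add: sm_zero_right poly_op_pCons kpoly_pCons_iff sm_mult sm_add_right A_sm_hom)

lemma poly_op_mult:
  "t \<in> A \<Longrightarrow> kpoly P \<Longrightarrow> kpoly Q \<Longrightarrow> poly_op t (P * Q) x = poly_op t P (poly_op t Q x)"
proof (induction P arbitrary: x)
  case (pCons a P)
  have "poly_op t (pCons a P * Q) x = poly_op t (smult a Q + pCons 0 (P * Q)) x" by simp
  also have "\<dots> = sm a (poly_op t Q x) + t (poly_op t P (poly_op t Q x))"
    using pCons by (simp add: poly_op_add poly_op_smult poly_op_pCons kpoly_smult kpoly_pCons_iff
        kpoly_mult k_zero)
  finally show ?case by (simp add: poly_op_pCons pCons.prems(1))
qed simp

lemma poly_op_diff:
  assumes "t \<in> A" "kpoly P" "kpoly Q"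
  shows "poly_op t (P - Q) x = poly_op t P x - poly_op t Q x"
  using poly_op_add[OF assms(1) kpoly_diff[OF assms(2,3)] assms(3)] by (simp add: eq_diff_eq)

lemma poly_op_power:
  assumes "t \<in> A" "kpoly P"
  shows "poly_op t (P ^ n) = poly_op t P ^^ n"
proof (induction n)
  case 0
  show ?case using poly_op_1[OF assms(1)] by (simp add: fun_eq_iff)
next
  case (Suc n)
  show ?case
  proof
    fix x
    have "poly_op t (P * P ^ n) x = poly_op t P (poly_op t (P ^ n) x)"
      by (rule poly_op_mult[OF assms kpoly_power[OF assms(2)]])
    thus "poly_op t (P ^ Suc n) x = (poly_op t P ^^ Suc n) x" by (simp only: power_Suc Suc.IH funpow.simps(2) comp_apply)
  qed
qed

lemma poly_op_const_mult:
  "t \<in> A \<Longrightarrow> a \<in> k \<Longrightarrow> kpoly Q \<Longrightarrow> poly_op t ([:a:] * Q) x = sm a (poly_op t Q x)"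
  by (simp add: poly_op_smult)

subsection \<open>Roots of unity and goodness\<close>

lemma one_minus_root_power_prime:
  assumes "prime p" "z ^ p = 1" "z \<in> k"
  obtains e where "e \<in> k" "(1 - z) ^ p = of_nat p * e"
proof -
  define \<sigma> where "\<sigma> = (\<Sum>i<p - 1. of_nat ((p choose Suc i) div p) * (- z) ^ i)"
  define \<epsilon> :: complex where "\<epsilon> = (if p = 2 then 1 else 0)"
  have "1 + (- z) ^ p = of_nat p * \<epsilon>"
  proof (cases "p = 2")
    case False
    hence "odd p" using assms(1) prime_ge_2_nat[OF assms(1)] by (intro prime_odd_nat) auto
    thus ?thesis using False assms(2) by (simp add: \<epsilon>_def)
  qed (use assms(2) in \<open>simp add: \<epsilon>_def\<close>)
  moreover have "(1 - z) ^ p = 1 + (- z) ^ p + of_nat p * (- z) * \<sigma>"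
    unfolding \<sigma>_def using binomial_prime_expansion[OF assms(1), of "- z"]
    by (simp only: diff_conv_add_uminus)
  ultimately have "(1 - z) ^ p = of_nat p * (\<epsilon> - z * \<sigma>)"
    by (simp add: algebra_simps)
  moreover have "\<epsilon> - z * \<sigma> \<in> k"
    unfolding \<sigma>_def \<epsilon>_def
    by (intro k_diff k_mult k_sum k_power k_uminus assms(3) k_of_nat) (simp_all add: k_one k_zero)
  ultimately show thesis using that by blast
qed

lemma prim_root_prime_factor:
  assumes "prime p" "prim_root p z" "z \<in> k"
  obtains \<gamma> where "\<gamma> \<in> k" "of_nat p = (1 - z) * \<gamma>"
proof
  show "(\<Sum>i<p. \<Sum>j<i. z ^ j) \<in> k" by (intro k_sum k_power assms(3))
  show "of_nat p = (1 - z) * (\<Sum>i<p. \<Sum>j<i. z ^ j)"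
    using one_minus_mult_nested_sum[of z p] prim_root_sum_powers[OF prime_gt_1_nat[OF assms(1)] assms(2)] by simp
qed

lemma one_minus_roots_power_divisible:
  assumes "prime p" "prim_root p z" "w ^ p = 1" "z \<in> k"
  obtains f where "f \<in> k" "((1 - z) * (1 - w)) ^ (p - 1) = of_nat p * (1 - z) * f"
proof -
  define \<pi> where "\<pi> = 1 - z"
  obtain j where "w = z ^ j"
    using prim_root_powers_exhaust[OF prime_gt_0_nat[OF assms(1)] assms(2,3)] by blast
  define d where "d = (\<Sum>i<j. z ^ i)"
  have d: "1 - w = \<pi> * d" unfolding \<open>w = z ^ j\<close> \<pi>_def d_def by (rule one_diff_power_eq)
  obtain e where e: "e \<in> k" "\<pi> ^ p = of_nat p * e"
    using one_minus_root_power_prime[OF assms(1) _ assms(4)] assms(2) by (auto simp: prim_root_def \<pi>_def)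
  define g where "g = (if p = 2 then 1 else e * \<pi> ^ (p - 3))"
  have "\<pi> ^ (p - 1) * \<pi> ^ (p - 1) = of_nat p * \<pi> * g"
  proof (cases "p = 2")
    case True
    hence "1 + z = 0" using prim_root_sum_powers[OF prime_gt_1_nat[OF assms(1)] assms(2)] by (simp add: numeral_2_eq_2)
    hence "\<pi> = 2" by (simp add: \<pi>_def add_eq_0_iff)
    thus ?thesis using True by (simp add: g_def)
  next
    case False
    hence "(p - 1) + (p - 1) = p + Suc (p - 3)" using prime_ge_2_nat[OF assms(1)] by simp
    hence "\<pi> ^ (p - 1) * \<pi> ^ (p - 1) = \<pi> ^ p * (\<pi> * \<pi> ^ (p - 3))"
      by (metis power_add power_Suc)
    thus ?thesis using False e(2) by (simp add: g_def mult_ac)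
  qed
  hence "((1 - z) * (1 - w)) ^ (p - 1) = of_nat p * (1 - z) * (g * d ^ (p - 1))"
    unfolding d \<pi>_def[symmetric] by (simp add: power_mult_distrib mult_ac)
  moreover have "g * d ^ (p - 1) \<in> k"
    unfolding g_def d_def \<pi>_def using e(1) assms(4) by (auto intro!: k_mult k_power k_sum k_diff k_one)
  ultimately show thesis using that by blast
qed

definition one_minus_injective :: "complex \<Rightarrow> bool" where
  "one_minus_injective \<rho> \<longleftrightarrow> (\<forall>f\<in>A. \<forall>x. x = sm \<rho> (f x) \<longrightarrow> x = 0)"

lemma good_scalar_injective:
  assumes "good sm c A" "c \<in> k" "sm c x = 0"
  shows "x = 0"
proof -
  have "inj (\<lambda>x. sm c (x - sm c ((\<lambda>x. 0) x)))"
    using assms(1) A_zero unfolding good_def by (rule bspec)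
  hence "inj (sm c)" by (simp add: sm_zero_right assms(2))
  thus ?thesis using assms(3) sm_zero_right[OF assms(2)] by (metis injD)
qed

lemma good_one_minus_injective:
  assumes "prime p" "z ^ p = 1" "z \<in> k" "good sm (of_nat p) A"
  shows "one_minus_injective (1 - z)"
  unfolding one_minus_injective_def
proof (intro ballI allI impI)
  fix f x assume f: "f \<in> A" and x: "x = sm (1 - z) (f x)"
  have \<rho>: "1 - z \<in> k" by (intro k_diff k_one assms(3))
  have iter: "x = sm ((1 - z) ^ n) ((f ^^ n) x)" for n
  proof (induction n)
    case (Suc n)
    have "x = sm (1 - z) (f (sm ((1 - z) ^ n) ((f ^^ n) x)))" using x Suc.IH by simp
    thus ?case by (simp add: A_sm_hom f k_power \<rho> sm_mult)
  qed simp
  obtain e where e: "e \<in> k" "(1 - z) ^ p = of_nat p * e"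
    using one_minus_root_power_prime[OF assms(1-3)] .
  define g where "g y = sm e ((f ^^ p) y)" for y
  have g: "g \<in> A" unfolding g_def by (intro A_sm e(1) A_funpow f)
  have "x = sm (of_nat p) (g x)"
    using iter[of p] by (simp add: e sm_mult k_of_nat g_def)
  hence "sm (of_nat p) (x - sm (of_nat p) (g x)) = sm (of_nat p) (0 - sm (of_nat p) (g 0))"
    by (simp add: A_zero_hom[OF g] sm_zero_right k_of_nat)
  thus "x = 0"
    using assms(4) g unfolding good_def by (blast dest: injD)
qed

lemma good_one_minus_root_scalar_injective:
  assumes "prime p" "prim_root p z" "z \<in> k" "good sm (of_nat p) A" "sm (1 - z) x = 0"
  shows "x = 0"
proof -
  obtain \<gamma> where \<gamma>: "\<gamma> \<in> k" "of_nat p = (1 - z) * \<gamma>"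
    using prim_root_prime_factor[OF assms(1-3)] .
  have "sm (of_nat p) x = sm \<gamma> (sm (1 - z) x)"
    unfolding \<gamma>(2) mult.commute[of "1 - z"] by (intro sm_mult \<gamma>(1) k_diff k_one assms(3))
  hence "sm (of_nat p) x = 0" using assms(5) by (simp add: sm_zero_right \<gamma>(1))
  thus ?thesis by (rule good_scalar_injective[OF assms(4) k_of_nat])
qed

subsection \<open>Unipotent elements of finite order\<close>

lemma binomial_prime_kpoly:
  assumes "prime l" "c \<in> k"
  obtains S where "kpoly S"
    "[:1, c:] ^ l = 1 + [:0, c:] * ([:of_nat l:] * (1 + [:0, c:] * S) + [:0, c:] ^ (l - 1))"
proof -
  define Y where "Y = [:0, c:]"
  define B where "B i = (of_nat ((l choose Suc i) div l) :: complex poly)" for i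
  define S where "S = (\<Sum>i<l - 2. B (Suc i) * Y ^ i)"
  have l: "l - 1 = Suc (l - 2)" "l = Suc (l - 1)" "0 < l" using prime_ge_2_nat[OF assms(1)] by auto
  have "[:1, c:] ^ l = 1 + Y ^ l + of_nat l * Y * (\<Sum>i<l - 1. B i * Y ^ i)"
    unfolding B_def using binomial_prime_expansion[OF assms(1), of Y] by (simp add: Y_def one_pCons)
  also have "(\<Sum>i<l - 1. B i * Y ^ i) = 1 + Y * S"
    unfolding l(1) sum.lessThan_Suc_shift S_def sum_distrib_left
    using l(3) by (simp add: B_def algebra_simps)
  also have "Y ^ l = Y * Y ^ (l - 1)"
    by (metis l(2) power_Suc)
  finally have "[:1, c:] ^ l = 1 + Y * ([:of_nat l:] * (1 + Y * S) + Y ^ (l - 1))"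
    by (simp add: of_nat_poly algebra_simps)
  moreover have "kpoly S"
    unfolding S_def B_def Y_def
    by (intro kpoly_sum kpoly_mult kpoly_power kpoly_of_nat kpoly_linear k_zero assms(2))
  ultimately show thesis using that unfolding Y_def by blast
qed

lemma poly_op_one_minus_injective:
  assumes "one_minus_injective \<rho>" "\<rho> \<in> k" "t \<in> A" "kpoly Q"
    and "poly_op t (1 - [:\<rho>:] * Q) x = 0"
  shows "x = 0"
proof -
  have "poly_op t (1 - [:\<rho>:] * Q) x = x - sm \<rho> (poly_op t Q x)"
    using assms(2-4)
    by (simp add: poly_op_diff poly_op_1 poly_op_smult kpoly_1 kpoly_smult)
  thus ?thesis
    using assms(1,5) poly_op_in_A[OF assms(3,4)] unfolding one_minus_injective_def by simp
qed

text \<open>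
  The polynomial evaluated in the next two lemmas is the quotient ((1 + cX)^l - 1) / (cX) with
  c = \<rho>\<rho>' produced by binomial_prime_kpoly.
\<close>

lemma binomial_quotient_injective_coprime:
  assumes "\<rho> \<in> k" "\<rho>' \<in> k" "\<gamma> \<in> k" "of_nat m = \<rho> * \<gamma>" "coprime l m" "2 \<le> l"
    and "one_minus_injective \<rho>" "t \<in> A" "kpoly S"
    and "poly_op t ([:of_nat l:] * (1 + [:0, \<rho> * \<rho>':] * S) + [:0, \<rho> * \<rho>':] ^ (l - 1)) y = 0"
  shows "y = 0"
proof -
  have "gcd (int l) (int m) = 1" using assms(5) by simp
  then obtain a b :: int where "a * int l + b * int m = 1" using bezout_int[of "int l" "int m"] by auto
  hence bezout: "of_int a * of_nat l + of_int b * (\<rho> * \<gamma>) = (1 :: complex)"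
    unfolding assms(4)[symmetric] by (metis of_int_1 of_int_add of_int_mult of_int_of_nat_eq)
  define a' b' l' r X Y Z :: "complex poly"
    where "a' = [:of_int a:]" "b' = [:of_int b * \<gamma>:]" "l' = [:of_nat l:]" "r = [:\<rho>:]"
      "X = [:0, \<rho>':]" "Y = [:0, \<rho> * \<rho>':]" "Z = Y ^ (l - 2)"
  define Q where "Q = b' * (1 + Y * S) - X * S - a' * X * Z"
  have "a' * l' = 1 - b' * r"
    unfolding a'_b'_l'_r_X_Y_Z_def using bezout by (simp add: one_pCons algebra_simps)
  moreover have "Y = r * X" by (simp add: a'_b'_l'_r_X_Y_Z_def)
  moreover have YZ: "Y ^ (l - 1) = Y * Z"
    unfolding a'_b'_l'_r_X_Y_Z_def(7) using assms(6)
    by (simp flip: power_Suc add: Suc_diff_Suc numeral_2_eq_2)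
  ultimately have "a' * (l' * (1 + Y * S) + Y ^ (l - 1)) = 1 - r * Q"
    unfolding Q_def YZ by algebra
  moreover have "kpoly Q" "kpoly (l' * (1 + Y * S) + Y ^ (l - 1))"
    unfolding Q_def a'_b'_l'_r_X_Y_Z_def using assms(1-3)
    by (intro kpoly_add kpoly_diff kpoly_mult kpoly_const kpoly_1 kpoly_power kpoly_linear assms(9)
        k_zero k_mult k_of_nat k_of_int; simp)+
  ultimately have "poly_op t (1 - r * Q) y = sm (of_int a) 0"
    using assms(8,10) unfolding a'_b'_l'_r_X_Y_Z_def by (metis poly_op_const_mult k_of_int)
  thus ?thesis
    using poly_op_one_minus_injective[OF assms(7,1,8) \<open>kpoly Q\<close>]
    by (simp add: sm_zero_right k_of_int a'_b'_l'_r_X_Y_Z_def)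
qed

lemma binomial_quotient_injective_divisible:
  assumes "\<rho> \<in> k" "\<rho>' \<in> k" "f \<in> k" "(\<rho> * \<rho>') ^ (l - 1) = of_nat l * \<rho> * f"
    and "\<And>x. sm (of_nat l) x = 0 \<Longrightarrow> x = 0"
    and "one_minus_injective \<rho>" "t \<in> A" "kpoly S"
    and "poly_op t ([:of_nat l:] * (1 + [:0, \<rho> * \<rho>':] * S) + [:0, \<rho> * \<rho>':] ^ (l - 1)) y = 0"
  shows "y = 0"
proof -
  define f' l' r X Y W :: "complex poly" where "f' = [:f:]" "l' = [:of_nat l:]" "r = [:\<rho>:]"
    "X = [:0, \<rho>':]" "Y = [:0, \<rho> * \<rho>':]" "W = [:0, 1:] ^ (l - 1)"
  define Q where "Q = - (X * S) - f' * W"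
  have "Y = r * X" by (simp add: f'_l'_r_X_Y_W_def)
  moreover have YW: "Y ^ (l - 1) = l' * r * f' * W"
  proof -
    have "Y = smult (\<rho> * \<rho>') [:0, 1:]" by (simp add: f'_l'_r_X_Y_W_def)
    hence "Y ^ (l - 1) = smult ((\<rho> * \<rho>') ^ (l - 1)) ([:0, 1:] ^ (l - 1))"
      by (simp only: smult_power)
    thus ?thesis unfolding assms(4) by (simp add: f'_l'_r_X_Y_W_def mult_ac)
  qed
  ultimately have "l' * (1 + Y * S) + Y ^ (l - 1) = l' * (1 - r * Q)"
    unfolding Q_def YW by algebra
  moreover have Q: "kpoly Q"
    unfolding Q_def f'_l'_r_X_Y_W_def using assms(2,3)
    by (intro kpoly_diff kpoly_uminus kpoly_mult kpoly_const kpoly_power kpoly_linear assms(8)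
        k_zero k_one)
  moreover have "poly_op t (l' * (1 + Y * S) + Y ^ (l - 1)) y = 0"
    using assms(9) unfolding f'_l'_r_X_Y_W_def .
  ultimately have "sm (of_nat l) (poly_op t (1 - r * Q) y) = 0"
    unfolding f'_l'_r_X_Y_W_def(2)
    by (metis poly_op_const_mult[OF assms(7) k_of_nat] kpoly_diff kpoly_1 kpoly_mult kpoly_const
        assms(1) f'_l'_r_X_Y_W_def(3))
  thus ?thesis
    using poly_op_one_minus_injective[OF assms(6,1,7) \<open>kpoly Q\<close>] assms(5)
    unfolding f'_l'_r_X_Y_W_def by blast
qed

lemma unipotent_funpow:
  assumes "c \<in> k" "t \<in> A"
  shows "\<exists>t'\<in>A. (\<lambda>x. x + sm c (t x)) ^^ n = (\<lambda>x. x + sm c (t' x))"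
proof (induction n)
  case 0
  show ?case using A_zero assms(1) by (intro bexI[of _ "\<lambda>x. 0"]) (simp_all add: sm_zero_right)
next
  case (Suc n)
  then obtain t' where t': "t' \<in> A" "(\<lambda>x. x + sm c (t x)) ^^ n = (\<lambda>x. x + sm c (t' x))" by blast
  have "(\<lambda>x. x + sm c (t x)) ^^ Suc n = (\<lambda>x. x + sm c (t' x + t x + sm c (t (t' x))))"
    using assms t'(2) by (simp add: fun_eq_iff A_add_hom A_sm_hom sm_add_right algebra_simps)
  moreover have "(\<lambda>x. t' x + t x + sm c (t (t' x))) \<in> A"
    using A_add[OF A_add[OF t'(1) assms(2)] A_sm[OF assms(1) A_comp[OF assms(2) t'(1)]]] .
  ultimately show ?case by (intro bexI[of _ "\<lambda>x. t' x + t x + sm c (t (t' x))"]) simp_all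
qed

lemma unipotent_prime_order_kernel:
  assumes "prime l" "c \<in> k" "t \<in> A" "(\<lambda>x. x + sm c (t x)) ^^ l = id"
  obtains S where "kpoly S"
    "\<And>x. poly_op t ([:of_nat l:] * (1 + [:0, c:] * S) + [:0, c:] ^ (l - 1)) (sm c (t x)) = 0"
proof -
  obtain S where S: "kpoly S"
    "[:1, c:] ^ l = 1 + [:0, c:] * ([:of_nat l:] * (1 + [:0, c:] * S) + [:0, c:] ^ (l - 1))"
    using binomial_prime_kpoly[OF assms(1,2)] .
  define N where "N = [:of_nat l:] * (1 + [:0, c:] * S) + [:0, c:] ^ (l - 1)"
  have Y: "kpoly [:0, c:]" "kpoly [:1, c:]" using assms(2) by (simp_all add: kpoly_linear k_zero k_one)
  have N: "kpoly N" unfolding N_def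
    by (intro kpoly_add kpoly_mult kpoly_const k_of_nat kpoly_1 Y(1) S(1) kpoly_power)
  have "poly_op t N (sm c (t x)) = 0" for x
  proof -
    have "poly_op t [:1, c:] = (\<lambda>x. x + sm c (t x))"
      using poly_op_linear[OF assms(3,2)] by auto
    hence "x = poly_op t ([:1, c:] ^ l) x"
      using assms(4) poly_op_power[OF assms(3) Y(2)] by simp
    also have "[:1, c:] ^ l = 1 + N * [:0, c:]"
      unfolding S(2) N_def by (simp only: mult.commute)
    also have "poly_op t (1 + N * [:0, c:]) x = x + poly_op t N (sm c (t x))"
      using poly_op_add[OF assms(3) kpoly_1 kpoly_mult[OF N Y(1)]] poly_op_mult[OF assms(3) N Y(1)]
        poly_op_1[OF assms(3)] poly_op_linear[OF assms(3,2)] by simp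
    finally show ?thesis by simp
  qed
  thus thesis using that S(1) unfolding N_def by blast
qed

lemma unipotent_torsion_trivial_if_prime_orders:
  assumes "c \<in> k"
    and prime_case: "\<And>l t. prime l \<Longrightarrow> t \<in> A \<Longrightarrow> (\<lambda>x. x + sm c (t x)) ^^ l = id
      \<Longrightarrow> t = (\<lambda>x. 0)"
  shows "t \<in> A \<Longrightarrow> 0 < n \<Longrightarrow> (\<lambda>x. x + sm c (t x)) ^^ n = id \<Longrightarrow> t = (\<lambda>x. 0)"
proof (induction n arbitrary: t rule: less_induct)
  case (less n)
  show ?case
  proof (cases "n = 1")
    case True
    hence "(\<lambda>x. x + sm c (t x)) ^^ 2 = id"
      using less.prems(3) by (simp add: numeral_2_eq_2 comp_def id_def)
    thus ?thesis using prime_case[OF two_is_prime_nat less.prems(1)] by blast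
  next
    case False
    then obtain l m where l: "prime l" "n = l * m"
      using prime_factor_nat less.prems(2) by (metis dvd_def nat_neq_iff less_one)
    hence "0 < m" "m < n" using less.prems(2) prime_gt_1_nat[OF l(1)] by auto
    obtain t' where t': "t' \<in> A" "(\<lambda>x. x + sm c (t x)) ^^ m = (\<lambda>x. x + sm c (t' x))"
      using unipotent_funpow[OF assms(1) less.prems(1)] by blast
    have "(\<lambda>x. x + sm c (t' x)) ^^ l = id"
      using less.prems(3) l(2) by (simp flip: t'(2) add: funpow_mult mult.commute id_def)
    hence "t' = (\<lambda>x. 0)" by (rule prime_case[OF l(1) t'(1)])
    hence "(\<lambda>x. x + sm c (t x)) ^^ m = id" using t'(2) by (simp add: sm_zero_right assms(1) id_def)
    thus ?thesis by (rule less.IH[OF \<open>m < n\<close> less.prems(1) \<open>0 < m\<close>])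
  qed
qed

lemma unipotent_commutator:
  assumes "\<pi> \<in> k" "\<tau> \<in> k" "s \<in> A" "r \<in> A"
  shows "(y + sm \<tau> (r y)) + sm \<pi> (s (y + sm \<tau> (r y)))
       = ((y + sm \<pi> (s y)) + sm \<tau> (r (y + sm \<pi> (s y)))) + sm (\<pi> * \<tau>) (s (r y) - r (s y))"
proof -
  have "sm \<pi> (s (sm \<tau> (r y))) = sm (\<pi> * \<tau>) (s (r y))"
    by (simp add: A_sm_hom assms sm_mult)
  hence "(y + sm \<tau> (r y)) + sm \<pi> (s (y + sm \<tau> (r y)))
      = y + sm \<tau> (r y) + sm \<pi> (s y) + sm (\<pi> * \<tau>) (s (r y))"
    by (simp add: A_add_hom assms sm_add_right)
  moreover have "sm \<tau> (r (sm \<pi> (s y))) = sm (\<pi> * \<tau>) (r (s y))"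
    using sm_mult[OF assms(2,1)] by (simp add: A_sm_hom assms mult.commute)
  hence "(y + sm \<pi> (s y)) + sm \<tau> (r (y + sm \<pi> (s y)))
      = y + sm \<pi> (s y) + sm \<tau> (r y) + sm (\<pi> * \<tau>) (r (s y))"
    by (simp add: A_add_hom assms sm_add_right)
  ultimately show ?thesis
    using sm_diff_right[OF k_mult[OF assms(1,2)]] by (simp add: algebra_simps)
qed

end

locale cyclotomic_endo_algebra = endo_algebra +
  fixes p q :: nat and zp zq :: complex
  assumes prime_p: "prime p" and prime_q: "prime q"
    and prim_root_p: "prim_root p zp" and prim_root_q: "prim_root q zq"
    and zp_in_k: "zp \<in> k" and zq_in_k: "zq \<in> k"
    and good_p: "good sm (of_nat p) A" and good_q: "good sm (of_nat q) A"
begin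

lemma pi_in_k: "1 - zp \<in> k" and tau_in_k: "1 - zq \<in> k"
  by (intro k_diff k_one zp_in_k zq_in_k)+

lemma pi_tau_scalar_injective:
  assumes "sm ((1 - zp) * (1 - zq)) x = 0"
  shows "x = 0"
proof -
  have "sm (1 - zp) (sm (1 - zq) x) = 0" using assms by (simp add: sm_mult pi_in_k tau_in_k)
  hence "sm (1 - zq) x = 0"
    by (rule good_one_minus_root_scalar_injective[OF prime_p prim_root_p zp_in_k good_p])
  thus ?thesis by (rule good_one_minus_root_scalar_injective[OF prime_q prim_root_q zq_in_k good_q])
qed

lemma prime_order_unipotent_trivial:
  assumes "prime l" "t \<in> A" "(\<lambda>x. x + sm ((1 - zp) * (1 - zq)) (t x)) ^^ l = id"
  shows "t = (\<lambda>x. 0)"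
proof
  fix x
  define \<pi> \<tau> where "\<pi> = 1 - zp" "\<tau> = 1 - zq"
  have k: "\<pi> \<in> k" "\<tau> \<in> k" "\<pi> * \<tau> \<in> k" using pi_in_k tau_in_k k_mult by (simp_all add: \<pi>_\<tau>_def)
  have inj: "one_minus_injective \<pi>" "one_minus_injective \<tau>"
    using good_one_minus_injective[OF prime_p _ zp_in_k good_p] prim_root_p
      good_one_minus_injective[OF prime_q _ zq_in_k good_q] prim_root_q
    by (simp_all add: prim_root_def \<pi>_\<tau>_def)
  obtain S where S: "kpoly S"
    and N0: "poly_op t ([:of_nat l:] * (1 + [:0, \<pi> * \<tau>:] * S) + [:0, \<pi> * \<tau>:] ^ (l - 1))
      (sm (\<pi> * \<tau>) (t x)) = 0"
    using unipotent_prime_order_kernel[OF assms(1) k(3) assms(2)] assms(3) unfolding \<pi>_\<tau>_def by metis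
  have "2 \<le> l" using prime_ge_2_nat[OF assms(1)] .
  have "sm (\<pi> * \<tau>) (t x) = 0"
  proof (cases "l = p")
    case False
    obtain \<gamma> where "\<gamma> \<in> k" "of_nat p = \<pi> * \<gamma>"
      using prim_root_prime_factor[OF prime_p prim_root_p zp_in_k] unfolding \<pi>_\<tau>_def .
    with primes_coprime[OF assms(1) prime_p False] show ?thesis
      by (intro binomial_quotient_injective_coprime[OF k(1,2) _ _ _ \<open>2 \<le> l\<close> inj(1) assms(2) S N0])
  next
    case True
    show ?thesis
    proof (cases "p = q")
      case False
      obtain \<gamma> where \<gamma>: "\<gamma> \<in> k" "of_nat q = \<tau> * \<gamma>"
        using prim_root_prime_factor[OF prime_q prim_root_q zq_in_k] unfolding \<pi>_\<tau>_def .
      have "coprime l q" using primes_coprime[OF assms(1) prime_q] True False by simp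
      from N0 have "poly_op t ([:of_nat l:] * (1 + [:0, \<tau> * \<pi>:] * S) + [:0, \<tau> * \<pi>:] ^ (l - 1))
          (sm (\<tau> * \<pi>) (t x)) = 0"
        unfolding mult.commute[of \<pi> \<tau>] .
      from binomial_quotient_injective_coprime
        [OF k(2,1) \<gamma> \<open>coprime l q\<close> \<open>2 \<le> l\<close> inj(2) assms(2) S this]
      show ?thesis by (simp only: mult.commute)
    next
      case pq: True
      have "zq ^ p = 1" using prim_root_q pq by (simp add: prim_root_def)
      obtain f where "f \<in> k" "(\<pi> * \<tau>) ^ (l - 1) = of_nat l * \<pi> * f"
        using one_minus_roots_power_divisible[OF prime_p prim_root_p \<open>zq ^ p = 1\<close> zp_in_k]
        unfolding \<pi>_\<tau>_def True .
      moreover have "\<And>y. sm (of_nat l) y = 0 \<Longrightarrow> y = 0"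
        using good_scalar_injective[OF good_p k_of_nat] unfolding True .
      ultimately show ?thesis
        by (rule binomial_quotient_injective_divisible[OF k(1,2) _ _ _ inj(1) assms(2) S N0])
    qed
  qed
  thus "t x = 0" using pi_tau_scalar_injective unfolding \<pi>_\<tau>_def by blast
qed

theorem unipotent_torsion_trivial:
  "t \<in> A \<Longrightarrow> 0 < n \<Longrightarrow> (\<lambda>x. x + sm ((1 - zp) * (1 - zq)) (t x)) ^^ n = id
    \<Longrightarrow> t = (\<lambda>x. 0)"
  by (rule unipotent_torsion_trivial_if_prime_orders[OF k_mult[OF pi_in_k tau_in_k]
        prime_order_unipotent_trivial])

theorem torsion_unipotent_trivial:
  assumes "s \<in> A"
    and "torsion_group (subgroup_gen (units_of (alg_monoid A)) {\<lambda>x. x + sm ((1 - zp) * (1 - zq)) (s x)})"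
  shows "s = (\<lambda>x. 0)"
proof -
  obtain n where "0 < n" "(\<lambda>x. x + sm ((1 - zp) * (1 - zq)) (s x)) ^^ n = id"
    using torsion_subgroup_gen_funpow[OF assms(2) generate.incl[OF singletonI]] .
  thus ?thesis by (rule unipotent_torsion_trivial[OF assms(1)])
qed

theorem torsion_units_commute:
  fixes s r
  defines "u \<equiv> \<lambda>x. x + sm (1 - zp) (s x)" and "v \<equiv> \<lambda>x. x + sm (1 - zq) (r x)"
  assumes "s \<in> A" "r \<in> A" "u \<in> Units (alg_monoid A)" "v \<in> Units (alg_monoid A)"
    and "torsion_group (subgroup_gen (units_of (alg_monoid A)) {u, v})"
  shows "u \<circ> v = v \<circ> u"
proof -
  define M where "M = alg_monoid A"
  interpret M: monoid M unfolding M_def by (rule monoid_alg_monoid)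
  have M: "carrier M = A" "mult M = (\<circ>)" "one M = id" by (simp_all add: M_def alg_monoid_def)
  define u' v' where "u' = inv\<^bsub>M\<^esub> u" "v' = inv\<^bsub>M\<^esub> v"
  have inv: "u' \<in> A" "v' \<in> A" "u (u' x) = x" "u' (u x) = x" "v (v' x) = x" "v' (v x) = x" for x
    using M.Units_inv_closed M.Units_r_inv M.Units_l_inv assms(5,6) M
    unfolding u'_v'_def M_def[symmetric] by (metis M.Units_closed comp_apply id_apply)+
  have "u \<otimes>\<^bsub>units_of M\<^esub> v \<otimes>\<^bsub>units_of M\<^esub> inv\<^bsub>units_of M\<^esub> u \<otimes>\<^bsub>units_of M\<^esub> inv\<^bsub>units_of M\<^esub> v
      \<in> generate (units_of M) {u, v}"
    by (intro generate.eng generate.incl generate.inv) auto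
  hence "u \<circ> v \<circ> u' \<circ> v' \<in> generate (units_of M) {u, v}"
    using assms(5,6)[folded M_def] unfolding u'_v'_def by (simp add: M.units_of_inv units_of_mult M)
  then obtain n where n: "0 < n" "(u \<circ> v \<circ> u' \<circ> v') ^^ n = id"
    using torsion_subgroup_gen_funpow assms(7) unfolding M_def by blast
  define t where "t y = s (r (u' (v' y))) - r (s (u' (v' y)))" for y
  have "(\<lambda>y. u' (v' y)) \<in> A" using A_comp[OF inv(1,2)] .
  hence "t \<in> A" unfolding t_def[abs_def]
    using A_diff[OF A_comp[OF assms(3) A_comp[OF assms(4)]] A_comp[OF assms(4) A_comp[OF assms(3)]]]
    by blast
  have comm: "u (v y) = v (u y) + sm ((1 - zp) * (1 - zq)) (s (r y) - r (s y))" for y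
    unfolding u_def v_def by (rule unipotent_commutator[OF pi_in_k tau_in_k assms(3,4)])
  have "u \<circ> v \<circ> u' \<circ> v' = (\<lambda>x. x + sm ((1 - zp) * (1 - zq)) (t x))"
    by (simp add: fun_eq_iff comm inv t_def)
  hence "t = (\<lambda>x. 0)" using unipotent_torsion_trivial[OF \<open>t \<in> A\<close> n(1)] n(2) by simp
  hence "t (v (u y)) = 0" for y by simp
  hence "s (r y) = r (s y)" for y by (simp add: t_def inv)
  thus ?thesis by (simp add: fun_eq_iff comm sm_zero_right k_mult pi_in_k tau_in_k)
qed

end

theorem mainTheorem19:
  fixes p q :: nat and zp zq :: complex
    and sm :: "complex \<Rightarrow> 'm::ab_group_add \<Rightarrow> 'm"
    and A :: "('m \<Rightarrow> 'm) set"
  assumes "prime p" and "prime q"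
    and "prim_root p zp" and "prim_root q zq"
    and "is_module (zring2 zp zq) sm"
    and "is_subalgebra (zring2 zp zq) sm A"
    and "good sm (of_nat p) A" and "good sm (of_nat q) A"
  shows "(\<forall>s\<in>A.
            (\<lambda>x. x + sm ((1 - zp) * (1 - zq)) (s x)) \<in> Units (alg_monoid A) \<and>
            torsion_group (subgroup_gen (units_of (alg_monoid A))
                             {\<lambda>x. x + sm ((1 - zp) * (1 - zq)) (s x)})
            \<longrightarrow> s = (\<lambda>x. 0))
       \<and> (\<forall>s\<in>A. \<forall>r\<in>A.
            (\<lambda>x. x + sm (1 - zp) (s x)) \<in> Units (alg_monoid A) \<and>
            (\<lambda>x. x + sm (1 - zq) (r x)) \<in> Units (alg_monoid A) \<and>
            torsion_group (subgroup_gen (units_of (alg_monoid A))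
                             {\<lambda>x. x + sm (1 - zp) (s x), \<lambda>x. x + sm (1 - zq) (r x)})
            \<longrightarrow> (\<lambda>x. x + sm (1 - zp) (s x)) \<circ> (\<lambda>x. x + sm (1 - zq) (r x))
              = (\<lambda>x. x + sm (1 - zq) (r x)) \<circ> (\<lambda>x. x + sm (1 - zp) (s x)))"
proof -
  interpret cyclotomic_endo_algebra "zring2 zp zq" sm A p q zp zq
    by unfold_locales (auto simp: assms intro: zring2.intros)
  show ?thesis
    using torsion_unipotent_trivial torsion_units_commute by blast
qed

end
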